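(* Let $p$ be a prime, $G$ a finite abelian $p$-group, and $\varphi\colon A\to B$ an isomorphism between subgroups of $G$. Let $r\ge 1$ be an integer such that for every integer $s>r$ and every $g\in G$: $g\in H(G,\varphi)$ if and only if $\varphi^i(g)$ is defined for $i=0,\dots,s-1$. Fix an integer $s>r$. For $i\in\mathbb{Z}/s\mathbb{Z}$ let $G_i=G\times\{i\}$, $A_i=A\times\{i\}$, $B_i=B\times\{i\}$ be copies of $G,A,B$, and let $K=G_0*_{A_0=B_1}G_1*_{A_1=B_2}\cdots*_{A_{s-2}=B_{s-1}}G_{s-1}$, where the amalgamation $A_i=B_{i+1}$ identifies $a\times i$ with $\varphi(a)\times(i+1)$ for $a\in A$. Then for every $j\in\{0,\dots,s-1\}$ the homomorphism $G_j\to H_1(K;\mathbb{Z})$ induced by the inclusion $G_j\to K$ is injective.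
   Context: The core $H(G,\varphi)$ is $\bigcap_k H_k$ where $H_0=A\cap B$ and $H_{k+1}=\varphi^{-1}(H_k)\cap H_k\cap\varphi(H_k)$ (with $\varphi^{-1}(H_k)=\{a\in A:\varphi(a)\in H_k\}$). "$\varphi^i(g)$ is defined" means $g$ lies in the domain of the $i$-fold composite of $\varphi$ regarded as a partial map $G\to G$. *)

theory Defs
  imports "HOL-Algebra.Algebra" "HOL-Computational_Algebra.Primes"
begin

text \<open>phi regarded as a partial map G -> G with domain A:
  iter_defined G A phi i g  means  phi^i(g) is defined.\<close>
fun iter_defined :: "('g, 'b) monoid_scheme \<Rightarrow> 'g set \<Rightarrow> ('g \<Rightarrow> 'g) \<Rightarrow> nat \<Rightarrow> 'g \<Rightarrow> bool" where
  "iter_defined G A phi 0 g = (g \<in> carrier G)"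
| "iter_defined G A phi (Suc i) g = (g \<in> A \<and> iter_defined G A phi i (phi g))"

fun core_step :: "'g set \<Rightarrow> 'g set \<Rightarrow> ('g \<Rightarrow> 'g) \<Rightarrow> nat \<Rightarrow> 'g set" where
  "core_step A B phi 0 = A \<inter> B"
| "core_step A B phi (Suc k) =
     {a \<in> A. phi a \<in> core_step A B phi k} \<inter> core_step A B phi k \<inter> phi ` core_step A B phi k"

definition core :: "'g set \<Rightarrow> 'g set \<Rightarrow> ('g \<Rightarrow> 'g) \<Rightarrow> 'g set" where
  "core A B phi = (\<Inter>k. core_step A B phi k)"

text \<open>The amalgamated free product
  K = G_0 *_{A_0=B_1} G_1 * ... *_{A_(s-2)=B_(s-1)} G_(s-1),
  given by the standard presentation: words in the letters (i,x), i < s, x in G,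
  modulo the congruence generated by the multiplication tables of the G_i and
  the amalgamation relations (i,a) = (i+1, phi a) for a in A, i+1 < s.\<close>
definition amal_letters :: "('g, 'b) monoid_scheme \<Rightarrow> nat \<Rightarrow> (nat \<times> 'g) set" where
  "amal_letters G s = {(i, x). i < s \<and> x \<in> carrier G}"

inductive amal_eq :: "('g, 'b) monoid_scheme \<Rightarrow> 'g set \<Rightarrow> ('g \<Rightarrow> 'g) \<Rightarrow> nat
    \<Rightarrow> (nat \<times> 'g) list \<Rightarrow> (nat \<times> 'g) list \<Rightarrow> bool"
  for G A phi s where
  refl: "w \<in> lists (amal_letters G s) \<Longrightarrow> amal_eq G A phi s w w"
| sym: "amal_eq G A phi s u v \<Longrightarrow> amal_eq G A phi s v u"
| trans: "amal_eq G A phi s u v \<Longrightarrow> amal_eq G A phi s v w \<Longrightarrow> amal_eq G A phi s u w"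
| cong: "amal_eq G A phi s u u' \<Longrightarrow> amal_eq G A phi s v v' \<Longrightarrow> amal_eq G A phi s (u @ v) (u' @ v')"
| unit: "i < s \<Longrightarrow> amal_eq G A phi s [(i, \<one>\<^bsub>G\<^esub>)] []"
| mult: "i < s \<Longrightarrow> x \<in> carrier G \<Longrightarrow> y \<in> carrier G \<Longrightarrow>
           amal_eq G A phi s [(i, x), (i, y)] [(i, x \<otimes>\<^bsub>G\<^esub> y)]"
| amalg: "Suc i < s \<Longrightarrow> a \<in> A \<Longrightarrow> amal_eq G A phi s [(i, a)] [(Suc i, phi a)]"

definition amal_rel :: "('g, 'b) monoid_scheme \<Rightarrow> 'g set \<Rightarrow> ('g \<Rightarrow> 'g) \<Rightarrow> nat
    \<Rightarrow> ((nat \<times> 'g) list \<times> (nat \<times> 'g) list) set" where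
  "amal_rel G A phi s = {(u, v). amal_eq G A phi s u v}"

definition amal_product :: "('g, 'b) monoid_scheme \<Rightarrow> 'g set \<Rightarrow> ('g \<Rightarrow> 'g) \<Rightarrow> nat
    \<Rightarrow> ((nat \<times> 'g) list set) monoid" where
  "amal_product G A phi s =
    \<lparr>carrier = lists (amal_letters G s) // amal_rel G A phi s,
     monoid.mult = (\<lambda>CX CY. amal_rel G A phi s `` {(SOME u. u \<in> CX) @ (SOME v. v \<in> CY)}),
     one = amal_rel G A phi s `` {[]}\<rparr>"

definition amal_incl :: "('g, 'b) monoid_scheme \<Rightarrow> 'g set \<Rightarrow> ('g \<Rightarrow> 'g) \<Rightarrow> nat \<Rightarrow> nat
    \<Rightarrow> 'g \<Rightarrow> (nat \<times> 'g) list set" where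
  "amal_incl G A phi s j x = amal_rel G A phi s `` {[(j, x)]}"

text \<open>H_1(K; Z) = abelianization K / [K,K], and the map it induces.\<close>
definition abelianization :: "('a, 'c) monoid_scheme \<Rightarrow> 'a set monoid" where
  "abelianization K = K Mod (derived K (carrier K))"

definition to_abelianization :: "('a, 'c) monoid_scheme \<Rightarrow> 'a \<Rightarrow> 'a set" where
  "to_abelianization K x = derived K (carrier K) #>\<^bsub>K\<^esub> x"

end

theory Submission
  imports Defs
begin

text \<open>Abelianizing the amalgam K and recording each letter by its index gives a homomorphism
  from K to G^\<nat> modulo the subgroup R generated by the vectors a e(k) - phi(a) e(k+1)
  with a \<in> A and k + 1 < s, so it suffices that z e(j) \<in> R forces z = 1. Write z e(j) with
  coefficients alpha(k) \<in> A. Comparing coordinates below j gives alpha(k) = 1 for k < j, hence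
  alpha(j) = z; above j they give alpha(k+1) = phi(alpha(k)), and since alpha(s-1) = 1 and phi is
  injective, descending from s - 1 yields alpha(j) = 1.\<close>

subsection \<open>Abelianization and direct powers\<close>

lemma (in group_hom) to_abelianization_eq_imp_hom_eq:
  assumes "comm_group H" and "x \<in> carrier G" "y \<in> carrier G"
    and "to_abelianization G x = to_abelianization G y"
  shows "h x = h y"
proof -
  let ?D = "derived G (carrier G)"
  have D: "subgroup ?D G" by (rule G.derived_is_subgroup) simp
  have "x \<in> ?D #> y"
    using G.repr_independenceD[OF D assms(2)] assms(4) unfolding to_abelianization_def by simp
  then obtain d where d: "d \<in> ?D" "x = d \<otimes>\<^bsub>G\<^esub> y" unfolding r_coset_def by blast
  have "h ` ?D = derived H (h ` carrier G)" by (simp add: derived_img)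
  also have "\<dots> = {\<one>\<^bsub>H\<^esub>}" by (rule comm_group.derived_eq_singleton[OF assms(1)]) auto
  finally have "h d = \<one>\<^bsub>H\<^esub>" using d(1) by blast
  then show ?thesis
    using d subgroup.mem_carrier[OF D] assms(3) by simp
qed

lemma comm_group_product_group:
  assumes "\<And>i. i \<in> I \<Longrightarrow> comm_group (G i)"
  shows "comm_group (product_group I G)"
proof (rule group.group_comm_groupI)
  show "group (product_group I G)" using assms by (simp add: comm_group.axioms(2))
  fix x y assume "x \<in> carrier (product_group I G)" "y \<in> carrier (product_group I G)"
  then show "x \<otimes>\<^bsub>product_group I G\<^esub> y = y \<otimes>\<^bsub>product_group I G\<^esub> x"
    using assms by (auto simp: PiE_iff comm_monoid.m_comm comm_group_def intro!: restrict_ext)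
qed

definition seq_group :: "('a, 'b) monoid_scheme \<Rightarrow> (nat \<Rightarrow> 'a) monoid" where
  "seq_group G = product_group UNIV (\<lambda>_. G)"

lemma carrier_seq_group: "t \<in> carrier (seq_group G) \<longleftrightarrow> (\<forall>k. t k \<in> carrier G)"
  by (simp add: seq_group_def PiE_UNIV_domain Pi_iff)

lemma one_seq_group: "\<one>\<^bsub>seq_group G\<^esub> = (\<lambda>_. \<one>\<^bsub>G\<^esub>)"
  by (simp add: seq_group_def restrict_UNIV)

lemma mult_seq_group: "t \<otimes>\<^bsub>seq_group G\<^esub> t' = (\<lambda>k. t k \<otimes>\<^bsub>G\<^esub> t' k)"
  by (simp add: seq_group_def restrict_UNIV)

lemma (in group) inv_seq_group:
  "t \<in> carrier (seq_group G) \<Longrightarrow> inv\<^bsub>seq_group G\<^esub> t = (\<lambda>k. inv (t k))"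
  using inv_product_group[of t UNIV "\<lambda>_. G"]
  by (simp add: seq_group_def restrict_UNIV is_group)

lemma comm_group_seq_group: "comm_group G \<Longrightarrow> comm_group (seq_group G)"
  unfolding seq_group_def by (rule comm_group_product_group)

subsection \<open>Quotients of free monoids\<close>

definition list_quotient :: "'a set \<Rightarrow> ('a list \<times> 'a list) set \<Rightarrow> 'a list set monoid" where
  "list_quotient S E = \<lparr>carrier = lists S // E,
     monoid.mult = (\<lambda>CX CY. E `` {(SOME u. u \<in> CX) @ (SOME v. v \<in> CY)}),
     one = E `` {[]}\<rparr>"

lemma equiv_class_some_rep:
  assumes "equiv S E" "u \<in> S"
  shows "(u, SOME v. v \<in> E``{u}) \<in> E"
  using someI[of "\<lambda>v. v \<in> E``{u}", OF equiv_class_self[OF assms]] by simp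

locale list_congruence =
  fixes S :: "'a set" and E :: "('a list \<times> 'a list) set"
  assumes equiv: "equiv (lists S) E"
    and append_cong: "(u, u') \<in> E \<Longrightarrow> (v, v') \<in> E \<Longrightarrow> (u @ v, u' @ v') \<in> E"
begin

lemma rel_refl: "u \<in> lists S \<Longrightarrow> (u, u) \<in> E"
  using equiv by (meson equiv_def refl_onD)

lemma carrier_list_quotient: "CX \<in> carrier (list_quotient S E) \<longleftrightarrow> (\<exists>u \<in> lists S. CX = E``{u})"
  by (auto simp: list_quotient_def quotient_def)

lemma one_list_quotient: "\<one>\<^bsub>list_quotient S E\<^esub> = E``{[]}"
  by (simp add: list_quotient_def)

lemma mult_list_quotient:
  assumes "u \<in> lists S" "v \<in> lists S"
  shows "E``{u} \<otimes>\<^bsub>list_quotient S E\<^esub> E``{v} = E``{u @ v}"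
proof -
  have "(u @ v, (SOME u'. u' \<in> E``{u}) @ (SOME v'. v' \<in> E``{v})) \<in> E"
    using append_cong equiv_class_some_rep[OF equiv] assms by blast
  then show ?thesis using equiv unfolding list_quotient_def by (simp add: equiv_class_eq)
qed

lemma left_inverse_word:
  assumes letter_inv: "\<And>x. x \<in> S \<Longrightarrow> \<exists>w \<in> lists S. (w @ [x], []) \<in> E"
    and "u \<in> lists S"
  shows "\<exists>w \<in> lists S. (w @ u, []) \<in> E"
  using \<open>u \<in> lists S\<close>
proof (induction u)
  case Nil
  then show ?case using rel_refl by auto
next
  case (Cons x u)
  obtain w where w: "w \<in> lists S" "(w @ u, []) \<in> E" using Cons.IH by blast
  obtain wx where wx: "wx \<in> lists S" "(wx @ [x], []) \<in> E" using letter_inv Cons.hyps(1) by blast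
  have "(w @ ((wx @ [x]) @ u), w @ ([] @ u)) \<in> E"
    using append_cong[OF rel_refl[OF w(1)] append_cong[OF wx(2) rel_refl[OF Cons.hyps(2)]]] .
  then have "((w @ wx) @ x # u, []) \<in> E"
    using w(2) equiv unfolding equiv_def by (auto elim: transE)
  then show ?case using w(1) wx(1) by (intro bexI[of _ "w @ wx"]) auto
qed

lemma group_list_quotient:
  assumes letter_inv: "\<And>x. x \<in> S \<Longrightarrow> \<exists>w \<in> lists S. (w @ [x], []) \<in> E"
  shows "group (list_quotient S E)"
proof (rule groupI)
  fix CX CY CZ
  assume "CX \<in> carrier (list_quotient S E)" "CY \<in> carrier (list_quotient S E)"
    "CZ \<in> carrier (list_quotient S E)"
  then obtain u v w where "u \<in> lists S" "v \<in> lists S" "w \<in> lists S"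
    and "CX = E``{u}" "CY = E``{v}" "CZ = E``{w}"
    unfolding carrier_list_quotient by blast
  then show "CX \<otimes>\<^bsub>list_quotient S E\<^esub> CY \<otimes>\<^bsub>list_quotient S E\<^esub> CZ =
      CX \<otimes>\<^bsub>list_quotient S E\<^esub> (CY \<otimes>\<^bsub>list_quotient S E\<^esub> CZ)"
    by (simp add: mult_list_quotient)
next
  fix CX assume "CX \<in> carrier (list_quotient S E)"
  then obtain u where u: "u \<in> lists S" "CX = E``{u}" unfolding carrier_list_quotient by blast
  show "\<one>\<^bsub>list_quotient S E\<^esub> \<otimes>\<^bsub>list_quotient S E\<^esub> CX = CX"
    using mult_list_quotient[of "[]" u] u by (simp add: one_list_quotient)
  obtain w where w: "w \<in> lists S" "(w @ u, []) \<in> E"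
    using left_inverse_word[OF letter_inv u(1)] by blast
  have "E``{w} \<otimes>\<^bsub>list_quotient S E\<^esub> CX = \<one>\<^bsub>list_quotient S E\<^esub>"
    unfolding u(2) mult_list_quotient[OF w(1) u(1)] one_list_quotient
    by (rule equiv_class_eq[OF equiv w(2)])
  moreover have "E``{w} \<in> carrier (list_quotient S E)"
    using w(1) unfolding carrier_list_quotient by blast
  ultimately show "\<exists>CY \<in> carrier (list_quotient S E).
      CY \<otimes>\<^bsub>list_quotient S E\<^esub> CX = \<one>\<^bsub>list_quotient S E\<^esub>"
    by blast
next
  fix CX CY
  assume "CX \<in> carrier (list_quotient S E)" "CY \<in> carrier (list_quotient S E)"
  then obtain u v where "u \<in> lists S" "v \<in> lists S" "CX = E``{u}" "CY = E``{v}"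
    unfolding carrier_list_quotient by blast
  moreover have "u @ v \<in> lists S" using \<open>u \<in> lists S\<close> \<open>v \<in> lists S\<close> by simp
  ultimately show "CX \<otimes>\<^bsub>list_quotient S E\<^esub> CY \<in> carrier (list_quotient S E)"
    unfolding carrier_list_quotient by (auto simp only: mult_list_quotient)
next
  show "\<one>\<^bsub>list_quotient S E\<^esub> \<in> carrier (list_quotient S E)"
    unfolding carrier_list_quotient one_list_quotient by blast
qed

end

subsection \<open>The chain amalgam and its abelianization\<close>

locale chain_amalgam = comm_group G for G :: "'g monoid" (structure) +
  fixes A :: "'g set" and phi :: "'g \<Rightarrow> 'g" and s :: nat
  assumes subgroup_A: "subgroup A G"
    and phi_hom: "phi \<in> hom (G\<lparr>carrier := A\<rparr>) G"
    and inj_on_phi: "inj_on phi A"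
begin

sublocale Phi: group_hom "G\<lparr>carrier := A\<rparr>" G phi
  using subgroup.subgroup_is_group[OF subgroup_A is_group] is_group phi_hom
  by (simp add: group_hom_def group_hom_axioms_def)

lemma phi_closed: "a \<in> A \<Longrightarrow> phi a \<in> carrier G"
  using Phi.hom_closed by simp

lemma phi_mult: "a \<in> A \<Longrightarrow> b \<in> A \<Longrightarrow> phi (a \<otimes> b) = phi a \<otimes> phi b"
  using Phi.hom_mult by simp

lemma phi_one: "phi \<one> = \<one>"
  using Phi.hom_one by simp

lemma phi_inv: "a \<in> A \<Longrightarrow> phi (inv a) = inv (phi a)"
  using Phi.hom_inv m_inv_consistent[OF subgroup_A] by simp

lemma A_closed: "a \<in> A \<Longrightarrow> a \<in> carrier G"
  using subgroup.mem_carrier[OF subgroup_A] .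

abbreviation "Letters \<equiv> amal_letters G s"
abbreviation "Amal_rel \<equiv> amal_rel G A phi s"
abbreviation "K \<equiv> amal_product G A phi s"
abbreviation "Seq \<equiv> seq_group G"

lemma amal_eq_lists: "amal_eq G A phi s u v \<Longrightarrow> u \<in> lists Letters \<and> v \<in> lists Letters"
  by (induction rule: amal_eq.induct) (auto simp: amal_letters_def A_closed phi_closed)

sublocale words: list_congruence Letters Amal_rel
proof
  show "equiv (lists Letters) Amal_rel"
    by (rule equivI)
      (auto simp: amal_rel_def refl_on_def sym_def trans_def
        intro: amal_eq.refl amal_eq.sym amal_eq.trans dest: amal_eq_lists)
qed (simp add: amal_rel_def amal_eq.cong)

lemma K_eq_list_quotient: "K = list_quotient Letters Amal_rel"
  by (simp add: amal_product_def list_quotient_def)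

lemma letter_left_inverse: "x \<in> Letters \<Longrightarrow> \<exists>w \<in> lists Letters. (w @ [x], []) \<in> Amal_rel"
proof -
  assume "x \<in> Letters"
  then obtain i g where x: "x = (i, g)" "i < s" "g \<in> carrier G" by (auto simp: amal_letters_def)
  have "amal_eq G A phi s [(i, inv g), (i, g)] [(i, inv g \<otimes> g)]"
    using x by (intro amal_eq.mult) auto
  moreover have "amal_eq G A phi s [(i, inv g \<otimes> g)] []"
    using amal_eq.unit[OF x(2)] x(3) by simp
  ultimately have "amal_eq G A phi s ([(i, inv g)] @ [x]) []"
    using x(1) by (auto intro: amal_eq.trans)
  moreover have "[(i, inv g)] \<in> lists Letters" using x by (simp add: amal_letters_def)
  ultimately show ?thesis unfolding amal_rel_def by blast
qed

lemma group_K: "group K"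
  unfolding K_eq_list_quotient by (rule words.group_list_quotient[OF letter_left_inverse])

interpretation Seq: comm_group Seq by (rule comm_group_seq_group) unfold_locales

definition single_seq :: "nat \<Rightarrow> 'g \<Rightarrow> nat \<Rightarrow> 'g" where
  "single_seq j x = (\<lambda>k. if k = j then x else \<one>)"

fun word_seq :: "(nat \<times> 'g) list \<Rightarrow> nat \<Rightarrow> 'g" where
  "word_seq [] = \<one>\<^bsub>Seq\<^esub>"
| "word_seq ((i, x) # w) = single_seq i x \<otimes>\<^bsub>Seq\<^esub> word_seq w"

text \<open>coboundary alpha is the product over all k of single_seq k (alpha k) and
  single_seq (k + 1) (inv (phi (alpha k))), the abelianized amalgamation relators; for admissible
  alpha only those with k + 1 < s occur.\<close>
fun coboundary :: "(nat \<Rightarrow> 'g) \<Rightarrow> nat \<Rightarrow> 'g" where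
  "coboundary \<alpha> 0 = \<alpha> 0"
| "coboundary \<alpha> (Suc k) = \<alpha> (Suc k) \<otimes> inv (phi (\<alpha> k))"

definition admissible :: "(nat \<Rightarrow> 'g) \<Rightarrow> bool" where
  "admissible \<alpha> \<longleftrightarrow> (\<forall>k. \<alpha> k \<in> A) \<and> (\<forall>k. s \<le> Suc k \<longrightarrow> \<alpha> k = \<one>)"

definition relators :: "(nat \<Rightarrow> 'g) set" where
  "relators = coboundary ` Collect admissible"

lemma single_seq_closed: "x \<in> carrier G \<Longrightarrow> single_seq j x \<in> carrier Seq"
  unfolding carrier_seq_group single_seq_def by simp

lemma single_seq_one: "single_seq j \<one> = \<one>\<^bsub>Seq\<^esub>"
  by (simp add: single_seq_def one_seq_group)

lemma single_seq_mult: "single_seq j x \<otimes>\<^bsub>Seq\<^esub> single_seq j y = single_seq j (x \<otimes> y)"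
  by (simp add: single_seq_def mult_seq_group fun_eq_iff)

lemma single_seq_inv: "x \<in> carrier G \<Longrightarrow> inv\<^bsub>Seq\<^esub> single_seq j x = single_seq j (inv x)"
  by (rule Seq.inv_equality) (simp_all add: single_seq_mult single_seq_one single_seq_closed)

lemma word_seq_singleton: "x \<in> carrier G \<Longrightarrow> word_seq [(j, x)] = single_seq j x"
  by (simp add: single_seq_closed)

lemma word_seq_closed: "w \<in> lists Letters \<Longrightarrow> word_seq w \<in> carrier Seq"
  by (induction w) (auto simp: amal_letters_def single_seq_closed)

lemma word_seq_append:
  "u \<in> lists Letters \<Longrightarrow> v \<in> lists Letters \<Longrightarrow> word_seq (u @ v) = word_seq u \<otimes>\<^bsub>Seq\<^esub> word_seq v"
proof (induction u)
  case Nil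
  then show ?case using word_seq_closed by simp
next
  case (Cons l u)
  then show ?case
    by (cases l) (auto simp: amal_letters_def Seq.m_assoc single_seq_closed word_seq_closed)
qed

lemma coboundary_closed: "admissible \<alpha> \<Longrightarrow> coboundary \<alpha> \<in> carrier Seq"
  unfolding carrier_seq_group admissible_def
  by (metis A_closed coboundary.elims inv_closed m_closed phi_closed)

lemma coboundary_mult:
  assumes "admissible \<alpha>" "admissible \<beta>"
  shows "coboundary \<alpha> \<otimes>\<^bsub>Seq\<^esub> coboundary \<beta> = coboundary (\<lambda>k. \<alpha> k \<otimes> \<beta> k)"
proof
  fix k show "(coboundary \<alpha> \<otimes>\<^bsub>Seq\<^esub> coboundary \<beta>) k = coboundary (\<lambda>k. \<alpha> k \<otimes> \<beta> k) k"
    using assms unfolding admissible_def mult_seq_group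
    by (cases k) (simp_all add: phi_mult inv_mult A_closed phi_closed m_ac)
qed

lemma coboundary_inv:
  assumes "admissible \<alpha>"
  shows "inv\<^bsub>Seq\<^esub> (coboundary \<alpha>) = coboundary (\<lambda>k. inv (\<alpha> k))"
proof
  fix k show "(inv\<^bsub>Seq\<^esub> (coboundary \<alpha>)) k = coboundary (\<lambda>k. inv (\<alpha> k)) k"
    using assms unfolding inv_seq_group[OF coboundary_closed[OF assms]] admissible_def
    by (cases k) (simp_all add: phi_inv inv_mult A_closed phi_closed)
qed

lemma subgroup_relators: "subgroup relators Seq"
proof (rule Seq.subgroupI)
  show "relators \<subseteq> carrier Seq"
    unfolding relators_def using coboundary_closed by blast
  have "admissible (\<lambda>_. \<one>)"
    unfolding admissible_def using subgroup.one_closed[OF subgroup_A] by simp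
  then show "relators \<noteq> {}" unfolding relators_def by blast
next
  fix t assume "t \<in> relators"
  then obtain \<alpha> where "admissible \<alpha>" "t = coboundary \<alpha>" unfolding relators_def by blast
  moreover have "admissible (\<lambda>k. inv (\<alpha> k))"
    using \<open>admissible \<alpha>\<close> subgroup.m_inv_closed[OF subgroup_A] by (simp add: admissible_def)
  ultimately show "inv\<^bsub>Seq\<^esub> t \<in> relators"
    unfolding relators_def by (simp add: coboundary_inv)
next
  fix t t' assume "t \<in> relators" "t' \<in> relators"
  then obtain \<alpha> \<beta> where "admissible \<alpha>" "t = coboundary \<alpha>" "admissible \<beta>" "t' = coboundary \<beta>"
    unfolding relators_def by blast
  moreover have "admissible (\<lambda>k. \<alpha> k \<otimes> \<beta> k)"
    using \<open>admissible \<alpha>\<close> \<open>admissible \<beta>\<close> subgroup.m_closed[OF subgroup_A]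
    by (simp add: admissible_def)
  ultimately show "t \<otimes>\<^bsub>Seq\<^esub> t' \<in> relators"
    unfolding relators_def by (simp add: coboundary_mult)
qed

interpretation relators: normal relators Seq
  by (rule Seq.subgroup_imp_normal[OF subgroup_relators])

lemma word_seq_coset_append:
  assumes "u \<in> lists Letters" "v \<in> lists Letters"
  shows "relators #>\<^bsub>Seq\<^esub> word_seq (u @ v) =
    (relators #>\<^bsub>Seq\<^esub> word_seq u) <#>\<^bsub>Seq\<^esub> (relators #>\<^bsub>Seq\<^esub> word_seq v)"
  using relators.rcos_sum[OF word_seq_closed[OF assms(1)] word_seq_closed[OF assms(2)]]
  by (simp add: word_seq_append[OF assms])

lemma word_seq_respects_amal_eq:
  "amal_eq G A phi s u v \<Longrightarrow> relators #>\<^bsub>Seq\<^esub> word_seq u = relators #>\<^bsub>Seq\<^esub> word_seq v"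
proof (induction rule: amal_eq.induct)
  case (cong u u' v v')
  have "u \<in> lists Letters" "u' \<in> lists Letters" "v \<in> lists Letters" "v' \<in> lists Letters"
    using cong.hyps amal_eq_lists by blast+
  then show ?case using cong.IH by (simp add: word_seq_coset_append)
next
  case (unit i)
  then show ?case by (simp add: word_seq_singleton single_seq_one)
next
  case (mult i x y)
  then show ?case by (simp add: word_seq_singleton single_seq_mult Seq.m_assoc[symmetric] single_seq_closed)
next
  case (amalg i a)
  have a: "a \<in> carrier G" "phi a \<in> carrier G" using amalg A_closed phi_closed by auto
  have "admissible (single_seq i a)"
    using amalg subgroup.one_closed[OF subgroup_A] by (simp add: admissible_def single_seq_def)
  moreover have "single_seq i a = coboundary (single_seq i a) \<otimes>\<^bsub>Seq\<^esub> single_seq (Suc i) (phi a)"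
  proof
    fix k show "single_seq i a k = (coboundary (single_seq i a) \<otimes>\<^bsub>Seq\<^esub> single_seq (Suc i) (phi a)) k"
      using a by (cases k) (auto simp: single_seq_def mult_seq_group phi_one)
  qed
  ultimately have "single_seq i a \<in> relators #>\<^bsub>Seq\<^esub> single_seq (Suc i) (phi a)"
    unfolding relators_def r_coset_def by blast
  then show ?case
    using Seq.repr_independence[OF _ single_seq_closed[OF a(2)] subgroup_relators]
    by (simp add: word_seq_singleton a del: word_seq.simps)
qed auto

definition word_coset :: "(nat \<times> 'g) list set \<Rightarrow> (nat \<Rightarrow> 'g) set" where
  "word_coset CX = relators #>\<^bsub>Seq\<^esub> word_seq (SOME u. u \<in> CX)"

lemma word_coset_class:
  "u \<in> lists Letters \<Longrightarrow> word_coset (Amal_rel``{u}) = relators #>\<^bsub>Seq\<^esub> word_seq u"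
proof -
  assume "u \<in> lists Letters"
  then have "amal_eq G A phi s u (SOME v. v \<in> Amal_rel``{u})"
    using equiv_class_some_rep[OF words.equiv] by (simp add: amal_rel_def)
  then show ?thesis
    unfolding word_coset_def by (simp add: word_seq_respects_amal_eq)
qed

lemma group_hom_word_coset: "group_hom K (Seq Mod relators) word_coset"
proof -
  have "word_coset \<in> hom K (Seq Mod relators)"
  proof (rule homI)
    fix CX assume "CX \<in> carrier K"
    then obtain u where "u \<in> lists Letters" "CX = Amal_rel``{u}"
      unfolding K_eq_list_quotient words.carrier_list_quotient by blast
    then show "word_coset CX \<in> carrier (Seq Mod relators)"
      using word_coset_class word_seq_closed by (auto simp: carrier_FactGroup)
  next
    fix CX CY assume "CX \<in> carrier K" "CY \<in> carrier K"
    then obtain u v where "u \<in> lists Letters" "CX = Amal_rel``{u}"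
      and "v \<in> lists Letters" "CY = Amal_rel``{v}"
      unfolding K_eq_list_quotient words.carrier_list_quotient by blast
    then show "word_coset (CX \<otimes>\<^bsub>K\<^esub> CY) = word_coset CX \<otimes>\<^bsub>Seq Mod relators\<^esub> word_coset CY"
      by (simp add: K_eq_list_quotient words.mult_list_quotient word_coset_class
          word_seq_coset_append)
  qed
  then show ?thesis
    using group_K relators.factorgroup_is_group by (simp add: group_hom_def group_hom_axioms_def)
qed

lemma coboundary_eq_one_below:
  assumes "\<And>k. \<alpha> k \<in> A" "\<And>k. k < j \<Longrightarrow> coboundary \<alpha> k = \<one>" "k < j"
  shows "\<alpha> k = \<one>"
  using assms(3)
proof (induction k)
  case 0
  then show ?case using assms(2)[of 0] by simp
next
  case (Suc k)
  then have "\<alpha> (Suc k) \<otimes> inv (phi \<one>) = \<one>" using assms(2)[of "Suc k"] by simp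
  then show ?case using assms(1) A_closed by (simp add: phi_one)
qed

lemma coboundary_eq_one_above:
  assumes "\<And>k. \<alpha> k \<in> A" "\<And>k. j < k \<Longrightarrow> coboundary \<alpha> k = \<one>" "j \<le> n" "\<alpha> n = \<one>"
  shows "\<alpha> j = \<one>"
  using assms(3,4)
proof (induction rule: inc_induct)
  case (step m)
  then have "\<alpha> (Suc m) \<otimes> inv (phi (\<alpha> m)) = \<one>" using assms(2)[of "Suc m"] by simp
  then have "phi (\<alpha> m) = phi \<one>"
    using step assms(1) phi_closed by (simp add: phi_one inv_eq_1_iff)
  then show ?case
    using inj_onD[OF inj_on_phi] assms(1) subgroup.one_closed[OF subgroup_A] by blast
qed

lemma coboundary_eq_single_seq_imp_one:
  assumes "admissible \<alpha>" "j < s" "coboundary \<alpha> = single_seq j z"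
  shows "z = \<one>"
proof -
  have in_A: "\<And>k. \<alpha> k \<in> A" and last: "\<alpha> (s - 1) = \<one>"
    using assms(1,2) by (auto simp: admissible_def)
  have below: "\<alpha> k = \<one>" if "k < j" for k
    by (rule coboundary_eq_one_below[OF in_A _ that]) (use assms(3) in \<open>simp add: single_seq_def\<close>)
  have "\<alpha> j = z"
  proof (cases j)
    case 0
    then show ?thesis using fun_cong[OF assms(3), of 0] by (simp add: single_seq_def)
  next
    case (Suc i)
    then show ?thesis
      using fun_cong[OF assms(3), of j] below[of i] in_A A_closed by (simp add: phi_one single_seq_def)
  qed
  moreover have "\<alpha> j = \<one>"
    by (rule coboundary_eq_one_above[where n = "s - 1"])
      (use in_A last assms(2,3) in \<open>auto simp: single_seq_def\<close>)
  ultimately show ?thesis by simp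
qed

lemma single_seq_coset_inj:
  assumes "j < s" "x \<in> carrier G" "y \<in> carrier G"
    and "relators #>\<^bsub>Seq\<^esub> single_seq j x = relators #>\<^bsub>Seq\<^esub> single_seq j y"
  shows "x = y"
proof -
  have "single_seq j x \<in> relators #>\<^bsub>Seq\<^esub> single_seq j y"
    using Seq.repr_independenceD[OF subgroup_relators single_seq_closed[OF assms(2)] assms(4)[symmetric]] .
  then have "single_seq j x \<otimes>\<^bsub>Seq\<^esub> inv\<^bsub>Seq\<^esub> single_seq j y \<in> relators"
    using subgroup.rcos_module_imp[OF subgroup_relators Seq.is_group single_seq_closed] assms(3)
    by blast
  moreover have "single_seq j x \<otimes>\<^bsub>Seq\<^esub> inv\<^bsub>Seq\<^esub> single_seq j y = single_seq j (x \<otimes> inv y)"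
    using assms(3) by (simp add: single_seq_inv single_seq_mult)
  ultimately obtain \<alpha> where "admissible \<alpha>" "coboundary \<alpha> = single_seq j (x \<otimes> inv y)"
    unfolding relators_def by auto
  then have "x \<otimes> inv y = \<one>" using coboundary_eq_single_seq_imp_one assms(1) by blast
  then show ?thesis using inv_equality[OF _ inv_closed[OF assms(3)] assms(2)] assms(3) by simp
qed

lemma inj_on_incl_abelianization:
  assumes "j < s"
  shows "inj_on (\<lambda>x. to_abelianization K (amal_incl G A phi s j x)) (carrier G)"
proof (rule inj_onI)
  fix x y
  assume "x \<in> carrier G" "y \<in> carrier G"
    and "to_abelianization K (amal_incl G A phi s j x) = to_abelianization K (amal_incl G A phi s j y)"
  moreover have "[(j, z)] \<in> lists Letters" if "z \<in> carrier G" for z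
    using assms that by (simp add: amal_letters_def)
  ultimately have "word_coset (Amal_rel``{[(j, x)]}) = word_coset (Amal_rel``{[(j, y)]})"
    using group_hom.to_abelianization_eq_imp_hom_eq[OF group_hom_word_coset]
      Seq.abelian_FactGroup[OF subgroup_relators]
    unfolding amal_incl_def K_eq_list_quotient words.carrier_list_quotient by blast
  then show "x = y"
    using single_seq_coset_inj[OF assms] \<open>x \<in> carrier G\<close> \<open>y \<in> carrier G\<close>
    by (simp add: word_coset_class word_seq_singleton amal_letters_def assms del: word_seq.simps)
qed

end

theorem lemma5p7:
  fixes G :: "'g monoid" and p :: nat and A B :: "'g set" and phi :: "'g \<Rightarrow> 'g"
    and r s :: nat
  assumes "Factorial_Ring.prime p"
    and "comm_group G" and "finite (carrier G)" and "\<exists>n. order G = p ^ n"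
    and "subgroup A G" and "subgroup B G"
    and "phi \<in> iso (G\<lparr>carrier := A\<rparr>) (G\<lparr>carrier := B\<rparr>)"
    and "r \<ge> 1"
    and "\<forall>s'. s' > r \<longrightarrow> (\<forall>g \<in> carrier G.
           g \<in> core A B phi \<longleftrightarrow> (\<forall>i < s'. iter_defined G A phi i g))"
    and "s > r"
  shows "\<forall>j < s. inj_on (\<lambda>x. to_abelianization (amal_product G A phi s) (amal_incl G A phi s j x))
                        (carrier G)"
proof -
  have "phi \<in> hom (G\<lparr>carrier := A\<rparr>) G"
    using assms(7) subgroup.subset[OF assms(6)] by (auto simp: iso_def hom_def)
  moreover have "inj_on phi A"
    using assms(7) by (simp add: iso_def bij_betw_def)
  ultimately interpret chain_amalgam G A phi s
    using assms(2,5) by (simp add: chain_amalgam_def chain_amalgam_axioms_def)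
  show ?thesis using inj_on_incl_abelianization by blast
qed

end
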